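(* Let $X$ be a Tychonoff pseudocompact space and $Y$ any space. Then $\mathsf{EC_{cl}}(X,Y)\Leftrightarrow\mathsf{EC_{cpt}}(X,Y)$.
   Context: All spaces are Hausdorff and maps continuous. A space is pseudocompact if every continuous real-valued function on it is bounded. For a non-Lindelöf space $X$ and a space $Y$: $\mathsf{EC_{cl}}(X,Y)$ means that for every continuous $f:X\to Y$ there is a closed Lindelöf $Z\subset X$ with $f(X\setminus Z)$ a singleton; $\mathsf{EC_{cpt}}(X,Y)$ is the same with "compact" in place of "closed Lindelöf". *)

theory Defs
  imports "HOL-Analysis.Analysis"
begin

definition pseudocompact_space :: "'a topology \<Rightarrow> bool" where
  "pseudocompact_space X \<equiv>
     \<forall>f::'a \<Rightarrow> real. continuous_map X euclideanreal f \<longrightarrow> bounded (f ` topspace X)"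

definition EC_cl :: "'a topology \<Rightarrow> 'b topology \<Rightarrow> bool" where
  "EC_cl X Y \<equiv>
     \<forall>f. continuous_map X Y f \<longrightarrow>
       (\<exists>Z. closedin X Z \<and> Lindelof_space (subtopology X Z) \<and>
            (\<exists>y. f ` (topspace X - Z) = {y}))"

definition EC_cpt :: "'a topology \<Rightarrow> 'b topology \<Rightarrow> bool" where
  "EC_cpt X Y \<equiv>
     \<forall>f. continuous_map X Y f \<longrightarrow>
       (\<exists>Z. compactin X Z \<and> (\<exists>y. f ` (topspace X - Z) = {y}))"

end

(* A pseudocompact Tychonoff space carries no locally finite sequence of nonempty open sets G n:
   pick x n in G n and Urysohn functions h n supported in G n with h n (x n) = 1; the locally finite
   sum of n * |h n| would be continuous and unbounded. Applied to the complements of the closures of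
   V 0 u ... u V (n - 1), this says that every countable open cover has a finite subfamily with dense
   union. Now let the closure K of an open set U be Lindelof. By regularity, an open cover of K has a
   countable refinement covering K whose closures lie in members of the cover; adding X - K and
   taking a finite subfamily with dense union, the open set U (which misses X - K) lies in the closure
   of finitely many refining sets, hence so does K, and K is compact.
   If f is constant y off a closed Lindelof set Z, the closure of the open set where f differs from y
   is such a K inside Z. Conversely, compact sets of a Hausdorff space are closed and Lindelof. *)

theory Submission
  imports Defs
begin

definition locally_finite_indexed_in :: "'a topology \<Rightarrow> ('i \<Rightarrow> 'a set) \<Rightarrow> bool" where
  "locally_finite_indexed_in X G \<longleftrightarrow>
     (\<forall>x \<in> topspace X. \<exists>V. openin X V \<and> x \<in> V \<and> finite {i. G i \<inter> V \<noteq> {}})"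

lemma locally_finite_indexed_in_finite_at:
  assumes "locally_finite_indexed_in X G" and "x \<in> topspace X"
  shows "finite {i. x \<in> G i}"
proof -
  obtain V where "x \<in> V" and fin: "finite {i. G i \<inter> V \<noteq> {}}"
    using assms unfolding locally_finite_indexed_in_def by blast
  then have "{i. x \<in> G i} \<subseteq> {i. G i \<inter> V \<noteq> {}}" by blast
  then show ?thesis using fin by (rule finite_subset)
qed

lemma continuous_map_sum_locally_finite:
  fixes h :: "'i \<Rightarrow> 'a \<Rightarrow> 'b::real_normed_vector"
  assumes lf: "locally_finite_indexed_in X G"
    and cont: "\<And>i. continuous_map X euclidean (h i)"
    and supp: "\<And>i x. x \<in> topspace X \<Longrightarrow> x \<notin> G i \<Longrightarrow> h i x = 0"
  shows "continuous_map X euclidean (\<lambda>x. \<Sum>i \<in> {i. x \<in> G i}. h i x)"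
proof -
  let ?g = "\<lambda>x. \<Sum>i \<in> {i. x \<in> G i}. h i x"
  have "\<forall>x \<in> topspace X. \<exists>V. openin X V \<and> x \<in> V \<and> continuous_map (subtopology X V) euclidean ?g"
  proof
    fix x assume "x \<in> topspace X"
    obtain V where V: "openin X V" "x \<in> V" and fin: "finite {i. G i \<inter> V \<noteq> {}}"
      using lf \<open>x \<in> topspace X\<close> unfolding locally_finite_indexed_in_def by blast
    have "continuous_map (subtopology X V) euclidean (\<lambda>y. \<Sum>i \<in> {i. G i \<inter> V \<noteq> {}}. h i y)"
      using fin cont by (intro continuous_map_sum continuous_map_from_subtopology)
    then have "continuous_map (subtopology X V) euclidean ?g"
    proof (rule continuous_map_eq)
      fix y assume "y \<in> topspace (subtopology X V)"
      then show "(\<Sum>i \<in> {i. G i \<inter> V \<noteq> {}}. h i y) = ?g y"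
        by (intro sum.mono_neutral_right[OF fin]) (auto simp: supp)
    qed
    with V show "\<exists>V. openin X V \<and> x \<in> V \<and> continuous_map (subtopology X V) euclidean ?g"
      by blast
  qed
  then obtain V where V: "\<forall>x \<in> topspace X.
      openin X (V x) \<and> x \<in> V x \<and> continuous_map (subtopology X (V x)) euclidean ?g"
    by (rule bchoice[THEN exE])
  show ?thesis
  proof (rule pasting_lemma[where I = "topspace X" and T = V and f = "\<lambda>_. ?g"])
    show "\<exists>j. j \<in> topspace X \<and> x \<in> V j \<and> ?g x = ?g x" if "x \<in> topspace X" for x
      using V that by blast
  qed (use V in simp_all)
qed

lemma pseudocompact_locally_finite_open_seq_has_empty:
  assumes crs: "completely_regular_space X" and pc: "pseudocompact_space X"
    and G: "\<And>n. openin X (G n)" and lf: "locally_finite_indexed_in X G"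
  shows "\<exists>n::nat. G n = {}"
proof (rule ccontr)
  assume "\<nexists>n. G n = {}"
  then have "\<forall>n. \<exists>y. y \<in> G n"
    by blast
  then obtain x where x: "\<forall>n. x n \<in> G n"
    by (rule choice[THEN exE])
  have xX: "x n \<in> topspace X" for n
    using G openin_subset x by blast
  have "\<forall>n. \<exists>f. continuous_map X euclideanreal f \<and> f (x n) = 1 \<and> f ` (topspace X - G n) \<subseteq> {0}"
    using crs G x unfolding completely_regular_space_gen_alt'[of 1 0, simplified] by blast
  then obtain h where "\<forall>n. continuous_map X euclideanreal (h n) \<and> h n (x n) = 1 \<and>
      h n ` (topspace X - G n) \<subseteq> {0}"
    by (rule choice[THEN exE])
  then have h: "\<And>n. continuous_map X euclideanreal (h n)"
    and hx: "\<And>n. h n (x n) = 1" and h0: "\<And>n. h n ` (topspace X - G n) \<subseteq> {0}"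
    by auto
  define g where "g y = (\<Sum>n \<in> {n. y \<in> G n}. real n * \<bar>h n y\<bar>)" for y
  have "continuous_map X euclideanreal g"
    unfolding g_def using lf h h0
    by (intro continuous_map_sum_locally_finite continuous_intros) auto
  then obtain B where B: "\<And>y. y \<in> topspace X \<Longrightarrow> \<bar>g y\<bar> \<le> B"
    using pc unfolding pseudocompact_space_def bounded_real by blast
  obtain n :: nat where n: "B < real n"
    using reals_Archimedean2 by blast
  have "real n * \<bar>h n (x n)\<bar> \<le> g (x n)"
    unfolding g_def
    by (rule member_le_sum) (use locally_finite_indexed_in_finite_at[OF lf xX] x in auto)
  with hx B[OF xX[of n]] n show False
    by simp
qed

lemma pseudocompact_countable_open_cover_dense:
  assumes crs: "completely_regular_space X" and pc: "pseudocompact_space X"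
    and "countable \<V>" and opn: "\<And>V. V \<in> \<V> \<Longrightarrow> openin X V"
    and cover: "topspace X \<subseteq> \<Union>\<V>"
  shows "\<exists>\<F>. finite \<F> \<and> \<F> \<subseteq> \<V> \<and> X closure_of \<Union>\<F> = topspace X"
proof (cases "\<V> = {}")
  case True
  with cover show ?thesis by auto
next
  case False
  define V where "V = from_nat_into \<V>"
  have V: "V n \<in> \<V>" for n
    by (simp add: V_def False from_nat_into)
  have "range V = \<V>"
    unfolding V_def using False \<open>countable \<V>\<close> by (rule range_from_nat_into)
  define G where "G n = topspace X - X closure_of (\<Union>i<n. V i)" for n
  have "\<exists>n. G n = {}"
  proof (rule pseudocompact_locally_finite_open_seq_has_empty[OF crs pc])
    show "openin X (G n)" for n
      unfolding G_def by (intro openin_diff openin_topspace closedin_closure_of)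
    show "locally_finite_indexed_in X G"
      unfolding locally_finite_indexed_in_def
    proof
      fix x assume "x \<in> topspace X"
      then obtain j where "x \<in> V j"
        using cover \<open>range V = \<V>\<close> by blast
      have disj: "G n \<inter> V j = {}" if "j < n" for n
      proof -
        have "V j \<subseteq> (\<Union>i<n. V i)" using that by blast
        also have "\<dots> \<subseteq> X closure_of (\<Union>i<n. V i)"
          using opn V openin_subset by (intro closure_of_subset) blast
        finally show ?thesis unfolding G_def by blast
      qed
      have "{n. G n \<inter> V j \<noteq> {}} \<subseteq> {..j}"
      proof
        fix n assume "n \<in> {n. G n \<inter> V j \<noteq> {}}"
        then have "\<not> j < n"
          using disj by blast
        then show "n \<in> {..j}"
          by simp
      qed
      then have "finite {n. G n \<inter> V j \<noteq> {}}"
        by (rule finite_subset) simp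
      with \<open>x \<in> V j\<close> opn V show "\<exists>W. openin X W \<and> x \<in> W \<and> finite {n. G n \<inter> W \<noteq> {}}"
        by blast
    qed
  qed
  then obtain n where "G n = {}" ..
  then have "X closure_of \<Union>(V ` {..<n}) = topspace X"
    unfolding G_def by (intro equalityI closure_of_subset_topspace) auto
  moreover have "V ` {..<n} \<subseteq> \<V>"
    using V by blast
  ultimately show ?thesis
    by (intro exI[of _ "V ` {..<n}"]) simp
qed

lemma regular_space_Lindelof_closure_refinement:
  assumes "regular_space X" and K: "K \<subseteq> topspace X" and lin: "Lindelof_space (subtopology X K)"
    and opn: "\<And>W. W \<in> \<U> \<Longrightarrow> openin X W" and cover: "K \<subseteq> \<Union>\<U>"
  shows "\<exists>\<V>. countable \<V> \<and> (\<forall>V \<in> \<V>. openin X V \<and> (\<exists>W \<in> \<U>. X closure_of V \<subseteq> W)) \<and> K \<subseteq> \<Union>\<V>"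
proof -
  have base: "neighbourhood_base_of (closedin X) X"
    using assms(1) neighbourhood_base_of_closedin by blast
  have "\<forall>p \<in> K. \<exists>V. openin X V \<and> p \<in> V \<and> (\<exists>W \<in> \<U>. X closure_of V \<subseteq> W)"
  proof
    fix p assume "p \<in> K"
    then obtain W where W: "W \<in> \<U>" "p \<in> W"
      using cover by blast
    then have "openin X W \<and> p \<in> W"
      using opn by blast
    then obtain V C where V: "openin X V" "p \<in> V" and C: "closedin X C" "V \<subseteq> C" "C \<subseteq> W"
      using base[unfolded neighbourhood_base_of, rule_format, of W p] by blast
    have "X closure_of V \<subseteq> C"
      using C by (simp add: closure_of_minimal)
    with V C W show "\<exists>V. openin X V \<and> p \<in> V \<and> (\<exists>W \<in> \<U>. X closure_of V \<subseteq> W)"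
      by blast
  qed
  then obtain N where N: "\<forall>p \<in> K. openin X (N p) \<and> p \<in> N p \<and> (\<exists>W \<in> \<U>. X closure_of (N p) \<subseteq> W)"
    by (rule bchoice[THEN exE])
  then have "(\<forall>S \<in> N ` K. openin X S) \<and> K \<subseteq> \<Union>(N ` K)"
    by blast
  then obtain \<V> where "countable \<V>" "\<V> \<subseteq> N ` K" "K \<subseteq> \<Union>\<V>"
    using lin[unfolded Lindelof_space_subtopology_subset[OF K], rule_format, of "N ` K"] by blast
  moreover have "\<forall>V \<in> \<V>. openin X V \<and> (\<exists>W \<in> \<U>. X closure_of V \<subseteq> W)"
    using N \<open>\<V> \<subseteq> N ` K\<close> by blast
  ultimately show ?thesis
    by (intro exI[of _ \<V>] conjI)
qed

lemma openin_subset_closure_of_Union_remove: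
  assumes U: "openin X U" and dense: "X closure_of \<Union>\<F> = topspace X" and "U \<inter> S = {}"
  shows "U \<subseteq> X closure_of \<Union>(\<F> - {S})"
proof -
  have "U \<subseteq> U \<inter> X closure_of \<Union>\<F>"
    using dense openin_subset[OF U] by blast
  also have "\<dots> \<subseteq> X closure_of (U \<inter> \<Union>\<F>)"
    using U by (rule openin_Int_closure_of_subset)
  also have "\<dots> \<subseteq> X closure_of \<Union>(\<F> - {S})"
    using \<open>U \<inter> S = {}\<close> by (intro closure_of_mono) blast
  finally show ?thesis .
qed

lemma pseudocompact_Lindelof_closure_compact:
  assumes crs: "completely_regular_space X" and pc: "pseudocompact_space X"
    and U: "openin X U" and lin: "Lindelof_space (subtopology X (X closure_of U))"
  shows "compactin X (X closure_of U)"
proof -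
  define K where "K = X closure_of U"
  have K: "K \<subseteq> topspace X" and UK: "U \<subseteq> K"
    unfolding K_def using U by (simp_all add: closure_of_subset_topspace closure_of_subset openin_subset)
  have "compactin X K"
    unfolding compactin_def
  proof (intro conjI K allI impI)
    fix \<U> assume "(\<forall>W \<in> \<U>. openin X W) \<and> K \<subseteq> \<Union>\<U>"
    then obtain \<V> where "countable \<V>" and \<V>: "\<forall>V \<in> \<V>. openin X V \<and> (\<exists>W \<in> \<U>. X closure_of V \<subseteq> W)"
      and K\<V>: "K \<subseteq> \<Union>\<V>"
      using regular_space_Lindelof_closure_refinement[OF completely_regular_imp_regular_space[OF crs] K]
        lin[folded K_def] by meson
    have "countable (insert (topspace X - K) \<V>)"
      using \<open>countable \<V>\<close> by simp
    moreover have "openin X S" if "S \<in> insert (topspace X - K) \<V>" for S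
      using that \<V> K_def by auto
    moreover have "topspace X \<subseteq> \<Union>(insert (topspace X - K) \<V>)"
      using K\<V> by blast
    ultimately have "\<exists>\<F>. finite \<F> \<and> \<F> \<subseteq> insert (topspace X - K) \<V> \<and>
        X closure_of \<Union>\<F> = topspace X"
      by (rule pseudocompact_countable_open_cover_dense[OF crs pc])
    then obtain \<F> where "finite \<F>" and \<F>: "\<F> \<subseteq> insert (topspace X - K) \<V>"
      and dense: "X closure_of \<Union>\<F> = topspace X"
      by blast
    define \<F>' where "\<F>' = \<F> - {topspace X - K}"
    have "U \<subseteq> X closure_of \<Union>\<F>'"
      unfolding \<F>'_def using UK by (intro openin_subset_closure_of_Union_remove[OF U dense]) blast
    then have "K \<subseteq> X closure_of \<Union>\<F>'"
      unfolding K_def by (rule closure_of_minimal) simp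
    also have "\<dots> = (\<Union>V \<in> \<F>'. X closure_of V)"
      unfolding \<F>'_def using \<open>finite \<F>\<close> by (simp add: closure_of_Union)
    finally have K\<F>': "K \<subseteq> (\<Union>V \<in> \<F>'. X closure_of V)" .
    have "\<forall>V \<in> \<F>'. \<exists>W. W \<in> \<U> \<and> X closure_of V \<subseteq> W"
      using \<F> \<V> unfolding \<F>'_def by blast
    then obtain W where W: "\<forall>V \<in> \<F>'. W V \<in> \<U> \<and> X closure_of V \<subseteq> W V"
      by (rule bchoice[THEN exE])
    have "finite (W ` \<F>')"
      unfolding \<F>'_def using \<open>finite \<F>\<close> by simp
    moreover have "W ` \<F>' \<subseteq> \<U>"
      using W by blast
    moreover have "K \<subseteq> \<Union>(W ` \<F>')"
      using K\<F>' W by blast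
    ultimately show "\<exists>\<F>. finite \<F> \<and> \<F> \<subseteq> \<U> \<and> K \<subseteq> \<Union>\<F>"
      by blast
  qed
  then show ?thesis
    unfolding K_def .
qed

lemma EC_cpt_imp_EC_cl:
  assumes "Hausdorff_space X" and "EC_cpt X Y"
  shows "EC_cl X Y"
  unfolding EC_cl_def
proof (intro allI impI)
  fix f assume "continuous_map X Y f"
  then obtain Z y where Z: "compactin X Z" and "f ` (topspace X - Z) = {y}"
    using assms(2) unfolding EC_cpt_def by blast
  moreover have "closedin X Z"
    using compactin_imp_closedin[OF assms(1) Z] .
  moreover have "Lindelof_space (subtopology X Z)"
    using Z by (simp add: compact_imp_Lindelof_space compact_space_subtopology)
  ultimately show "\<exists>Z. closedin X Z \<and> Lindelof_space (subtopology X Z) \<and> (\<exists>y. f ` (topspace X - Z) = {y})"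
    by blast
qed

lemma EC_cl_imp_EC_cpt:
  assumes crs: "completely_regular_space X" and pc: "pseudocompact_space X"
    and "t1_space Y" and "EC_cl X Y"
  shows "EC_cpt X Y"
  unfolding EC_cpt_def
proof (intro allI impI)
  fix f assume f: "continuous_map X Y f"
  then obtain Z y where Z: "closedin X Z" "Lindelof_space (subtopology X Z)"
    and fZ: "f ` (topspace X - Z) = {y}"
    using assms(4) unfolding EC_cl_def by blast
  then obtain z where z: "z \<in> topspace X - Z" "f z = y"
    by blast
  define U where "U = {x \<in> topspace X. f x \<in> topspace Y - {y}}"
  define K where "K = X closure_of U"
  have "y \<in> topspace Y"
    using f z continuous_map_image_subset_topspace by fastforce
  then have "openin Y (topspace Y - {y})"
    using \<open>t1_space Y\<close> by (simp add: closedin_t1_singleton openin_diff)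
  then have U: "openin X U"
    unfolding U_def by (rule openin_continuous_map_preimage[OF f])
  have "U \<subseteq> Z"
    using fZ unfolding U_def by blast
  then have "K \<subseteq> Z"
    unfolding K_def using Z(1) by (rule closure_of_minimal)
  then have "closedin (subtopology X Z) K"
    unfolding K_def by (intro closedin_subset_topspace closedin_closure_of)
  then have "Lindelof_space (subtopology X (Z \<inter> K))"
    using Lindelof_space_closedin_subtopology[OF Z(2)] by (simp add: subtopology_subtopology)
  then have "Lindelof_space (subtopology X K)"
    using \<open>K \<subseteq> Z\<close> by (simp add: Int_absorb1)
  then have "compactin X K"
    unfolding K_def by (rule pseudocompact_Lindelof_closure_compact[OF crs pc U])
  moreover have "f ` (topspace X - K) = {y}"
  proof
    have "U \<subseteq> K"
      unfolding K_def U_def by (rule closure_of_subset) blast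
    with f show "f ` (topspace X - K) \<subseteq> {y}"
      unfolding U_def using continuous_map_image_subset_topspace by fastforce
    show "{y} \<subseteq> f ` (topspace X - K)"
      using z \<open>K \<subseteq> Z\<close> by blast
  qed
  ultimately show "\<exists>Z. compactin X Z \<and> (\<exists>y. f ` (topspace X - Z) = {y})"
    by blast
qed

theorem theorem9p5:
  fixes X :: "'a topology" and Y :: "'b topology"
  assumes "Hausdorff_space X" and "completely_regular_space X"
    and "pseudocompact_space X" and "\<not> Lindelof_space X"
    and "Hausdorff_space Y"
  shows "EC_cl X Y \<longleftrightarrow> EC_cpt X Y"
  using EC_cl_imp_EC_cpt[OF assms(2,3) Hausdorff_imp_t1_space[OF assms(5)]]
    EC_cpt_imp_EC_cl[OF assms(1)]
  by blast

end
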